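(* Let $G$ be a Tanner graph representing the binary code $\mathcal{C}$, and let $p$ be a lift-realizable pseudocodeword of $G$. Then $p$ can be written as $p=c^{(1)}+c^{(2)}+\cdots+c^{(k)}+r$, where $c^{(1)},\dots,c^{(k)}\in\mathcal{C}$ are (not necessarily distinct) codewords and $r$ is a nonnegative integer vector such that no nonzero codeword $c\in\mathcal{C}$ has $\operatorname{supp}(c)\subseteq\operatorname{supp}(r)$; moreover, either $r$ is the all-zeros vector or every entry of $r$ is $0$ or even.
   Context: A Tanner graph $G$ is a finite bipartite graph with variable nodes $v_1,\dots,v_n$ and check nodes; its code $\mathcal{C}$ consists of all $x\in\{0,1\}^n$ with every check node having an even number of neighbours $v_i$ with $x_i=1$. A degree-$\ell$ lift replaces each node by $\ell$ copies and each edge by a perfect matching between copy-sets; a lift-realizable pseudocodeword $p\in\mathbb{Z}_{\ge0}^n$ is obtained from a codeword of the code of a finite lift by letting $p_i$ be the number of copies of $v_i$ assigned 1. $\operatorname{supp}(x)=\{i:x_i\neq0\}$. *)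

theory Defs
  imports Main
begin

text \<open>A Tanner graph with variable nodes 0..<n, check nodes 0..<m and edge set E;
  a pair (i,j) in E means variable node i is adjacent to check node j.
  Vectors in Z_{>=0}^n are functions nat => nat vanishing outside {..<n}.\<close>

definition tanner_graph :: "nat \<Rightarrow> nat \<Rightarrow> (nat \<times> nat) set \<Rightarrow> bool" where
  "tanner_graph n m E \<longleftrightarrow> E \<subseteq> {..<n} \<times> {..<m}"

definition tanner_code :: "nat \<Rightarrow> nat \<Rightarrow> (nat \<times> nat) set \<Rightarrow> (nat \<Rightarrow> nat) set" where
  "tanner_code n m E = {x. (\<forall>i. x i \<in> {0,1}) \<and> (\<forall>i\<ge>n. x i = 0) \<and>
      (\<forall>j<m. even (card {i. i < n \<and> (i,j) \<in> E \<and> x i = 1}))}"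

text \<open>A degree-l lift: variable node i becomes copies (i,a), a < l; check node j becomes
  copies (j,b), b < l; edge e = (i,j) becomes the perfect matching (i,a) -- (j, \<pi> e a),
  where \<pi> e is a bijection of {..<l}.\<close>
definition lift_codeword ::
  "nat \<Rightarrow> nat \<Rightarrow> (nat \<times> nat) set \<Rightarrow> nat \<Rightarrow> (nat \<times> nat \<Rightarrow> nat \<Rightarrow> nat) \<Rightarrow> (nat \<times> nat \<Rightarrow> bool) \<Rightarrow> bool" where
  "lift_codeword n m E l \<pi> y \<longleftrightarrow>
     (\<forall>j<m. \<forall>b<l. even (card {(i,a). i < n \<and> a < l \<and> (i,j) \<in> E \<and> \<pi> (i,j) a = b \<and> y (i,a)}))"

definition lift_realizable_pseudocodeword ::
  "nat \<Rightarrow> nat \<Rightarrow> (nat \<times> nat) set \<Rightarrow> (nat \<Rightarrow> nat) \<Rightarrow> bool" where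
  "lift_realizable_pseudocodeword n m E p \<longleftrightarrow>
     (\<exists>l \<pi> y. l \<ge> 1 \<and> (\<forall>e\<in>E. bij_betw (\<pi> e) {..<l} {..<l}) \<and>
        lift_codeword n m E l \<pi> y \<and>
        p = (\<lambda>i. if i < n then card {a. a < l \<and> y (i,a)} else 0))"

definition supp :: "(nat \<Rightarrow> nat) \<Rightarrow> nat set" where
  "supp x = {i. x i \<noteq> 0}"

end

theory Submission
  imports Defs
begin

text \<open>Each check copy of a lift sees an even number of ones, so every check of the base graph
  sees an even total weight of the pseudocodeword. Peeling off codewords supported inside the
  support of the remainder preserves this and strictly decreases the total weight. When it stops,
  the remainder reduced mod 2 is again a codeword supported inside the remainder, so it vanishes:
  all entries of the remainder are even.\<close>

definition check_neighbours :: "nat \<Rightarrow> (nat \<times> nat) set \<Rightarrow> nat \<Rightarrow> nat set" where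
  "check_neighbours n E j = {i. i < n \<and> (i, j) \<in> E}"

definition even_check_sums :: "nat \<Rightarrow> nat \<Rightarrow> (nat \<times> nat) set \<Rightarrow> (nat \<Rightarrow> nat) \<Rightarrow> bool" where
  "even_check_sums n m E r \<longleftrightarrow>
     (\<forall>i\<ge>n. r i = 0) \<and> (\<forall>j<m. even (sum r (check_neighbours n E j)))"

lemma finite_check_neighbours [simp]: "finite (check_neighbours n E j)"
  by (simp add: check_neighbours_def)

lemma tanner_code_iff_even_check_sums:
  "x \<in> tanner_code n m E \<longleftrightarrow> (\<forall>i. x i \<le> 1) \<and> even_check_sums n m E x"
proof -
  have "even (sum x (check_neighbours n E j)) \<longleftrightarrow>
        even (card {i. i < n \<and> (i, j) \<in> E \<and> x i = 1})" if "\<forall>i. x i \<le> 1" for j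
  proof -
    have "odd (x i) \<longleftrightarrow> x i = 1" for i
      using that[rule_format, of i] by (auto simp: le_Suc_eq)
    then have "{i \<in> check_neighbours n E j. odd (x i)} = {i. i < n \<and> (i, j) \<in> E \<and> x i = 1}"
      by (auto simp: check_neighbours_def)
    then show ?thesis by (simp add: even_sum_iff)
  qed
  moreover have "(\<forall>i. x i \<in> {0, 1}) \<longleftrightarrow> (\<forall>i. x i \<le> 1)"
    by (auto simp: le_Suc_eq)
  ultimately show ?thesis
    unfolding tanner_code_def even_check_sums_def by auto
qed

lemma even_check_sums_diff:
  assumes "even_check_sums n m E r" and "even_check_sums n m E c" and "\<And>i. c i \<le> r i"
  shows "even_check_sums n m E (\<lambda>i. r i - c i)"
  unfolding even_check_sums_def
proof (intro conjI allI impI)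
  fix i assume "n \<le> i"
  then show "r i - c i = 0" using assms(1) by (simp add: even_check_sums_def)
next
  fix j assume "j < m"
  then have "even (sum r (check_neighbours n E j))" "even (sum c (check_neighbours n E j))"
    using assms(1,2) by (simp_all add: even_check_sums_def)
  moreover have "sum c (check_neighbours n E j) \<le> sum r (check_neighbours n E j)"
    using assms(3) by (simp add: sum_mono)
  ultimately show "even (\<Sum>i\<in>check_neighbours n E j. r i - c i)"
    using assms(3) by (simp add: sum_subtractf_nat)
qed

lemma even_check_sums_mod_2_in_tanner_code:
  assumes "even_check_sums n m E r"
  shows "(\<lambda>i. r i mod 2) \<in> tanner_code n m E"
proof -
  have "even (\<Sum>i\<in>A. r i mod 2) \<longleftrightarrow> even (sum r A)" if "finite A" for A
    using that by (simp add: even_sum_iff)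
  moreover have "r i mod 2 \<le> 1" for i
    by presburger
  ultimately show ?thesis
    using assms by (simp add: tanner_code_iff_even_check_sums even_check_sums_def)
qed

lemma even_if_no_codeword_within_supp:
  assumes "even_check_sums n m E r"
    and "\<forall>cw \<in> tanner_code n m E. cw \<noteq> (\<lambda>_. 0) \<longrightarrow> \<not> supp cw \<subseteq> supp r"
  shows "even (r i)"
proof -
  have "supp (\<lambda>i. r i mod 2) \<subseteq> supp r"
    by (auto simp: supp_def)
  then have "(\<lambda>i. r i mod 2) = (\<lambda>_. 0)"
    using assms even_check_sums_mod_2_in_tanner_code by blast
  then show ?thesis
    by (metis even_iff_mod_2_eq_zero)
qed

lemma codeword_le_if_supp_subset:
  assumes "c \<in> tanner_code n m E" and "supp c \<subseteq> supp r"
  shows "c i \<le> r i"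
proof (cases "c i = 0")
  case False
  have "c i \<in> {0, 1}"
    using assms(1) by (simp add: tanner_code_def)
  with False have "c i = 1"
    by simp
  moreover have "r i \<noteq> 0"
    using False assms(2) by (auto simp: supp_def)
  ultimately
  show ?thesis by simp
qed simp

lemma even_check_sums_peel_codewords:
  assumes "even_check_sums n m E r"
  shows "\<exists>k (c :: nat \<Rightarrow> nat \<Rightarrow> nat) r'.
           (\<forall>t<k. c t \<in> tanner_code n m E) \<and>
           (\<forall>i. r i = (\<Sum>t<k. c t i) + r' i) \<and> even_check_sums n m E r' \<and>
           (\<forall>cw \<in> tanner_code n m E. cw \<noteq> (\<lambda>_. 0) \<longrightarrow> \<not> supp cw \<subseteq> supp r')"
  using assms
proof (induction "\<Sum>i<n. r i" arbitrary: r rule: less_induct)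
  case less
  show ?case
  proof (cases "\<exists>c \<in> tanner_code n m E. c \<noteq> (\<lambda>_. 0) \<and> supp c \<subseteq> supp r")
    case False
    then show ?thesis
      using less.prems by (intro exI[of _ 0] exI[of _ r]) auto
  next
    case True
    then obtain c where c: "c \<in> tanner_code n m E" "c \<noteq> (\<lambda>_. 0)" "supp c \<subseteq> supp r"
      by blast
    have c_le: "c i \<le> r i" for i
      using codeword_le_if_supp_subset[OF c(1,3)] .
    define r1 where "r1 = (\<lambda>i. r i - c i)"
    have r1: "even_check_sums n m E r1"
      unfolding r1_def using less.prems c(1) c_le
      by (intro even_check_sums_diff) (simp_all add: tanner_code_iff_even_check_sums)
    obtain i0 where "c i0 \<noteq> 0"
      using c(2) by auto
    moreover have "i0 < n"
      using \<open>c i0 \<noteq> 0\<close> c(1) by (meson not_le tanner_code_iff_even_check_sums even_check_sums_def)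
    ultimately have "(\<Sum>i<n. r1 i) < (\<Sum>i<n. r i)"
      using c_le[of i0] by (intro sum_strict_mono_ex1 bexI[of _ i0]) (auto simp: r1_def)
    then obtain k :: nat and cs r' where cs: "\<forall>t<k. cs t \<in> tanner_code n m E"
        and r1_eq: "\<forall>i. r1 i = (\<Sum>t<k. cs t i) + r' i"
        and r': "even_check_sums n m E r'"
          "\<forall>cw \<in> tanner_code n m E. cw \<noteq> (\<lambda>_. 0) \<longrightarrow> \<not> supp cw \<subseteq> supp r'"
      using less.hyps r1 by blast
    define cs' where "cs' = cs(k := c)"
    have "\<forall>t<Suc k. cs' t \<in> tanner_code n m E"
      using cs c(1) by (simp add: cs'_def less_Suc_eq)
    moreover have "r i = (\<Sum>t<Suc k. cs' t i) + r' i" for i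
    proof -
      have "(\<Sum>t<Suc k. cs' t i) = (\<Sum>t<k. cs t i) + c i"
        by (simp add: cs'_def)
      moreover have "r i - c i = (\<Sum>t<k. cs t i) + r' i"
        using r1_eq by (simp add: r1_def)
      ultimately show ?thesis
        using c_le[of i] by linarith
    qed
    ultimately show ?thesis
      using r' by blast
  qed
qed

lemma even_card_if_fibres_even:
  assumes "finite S" and "f ` S \<subseteq> B" and "finite B"
    and "\<And>b. b \<in> B \<Longrightarrow> even (card {x \<in> S. f x = b})"
  shows "even (card S)"
proof -
  have "card S = (\<Sum>b\<in>B. card {x \<in> S. f x = b})"
    using sum.group[OF assms(1,3,2), of "\<lambda>_. 1 :: nat"] by simp
  then show ?thesis
    using assms(4) by (simp add: dvd_sum)
qed

lemma lift_realizable_even_check_sums: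
  assumes "lift_realizable_pseudocodeword n m E p"
  shows "even_check_sums n m E p"
proof -
  obtain l \<pi> y where bij: "\<forall>e\<in>E. bij_betw (\<pi> e) {..<l} {..<l}"
    and lift: "lift_codeword n m E l \<pi> y"
    and p: "p = (\<lambda>i. if i < n then card {a. a < l \<and> y (i, a)} else 0)"
    using assms unfolding lift_realizable_pseudocodeword_def by blast
  have "even (sum p (check_neighbours n E j))" if "j < m" for j
  proof -
    define N where "N = check_neighbours n E j"
    \<comment> \<open>The ones on copies of neighbours of j, grouped by the copy of j each is matched to.\<close>
    define S where "S = Sigma N (\<lambda>i. {a. a < l \<and> y (i, a)})"
    have "card S = sum p N"
      by (simp add: S_def N_def card_SigmaI p check_neighbours_def)
    moreover have "even (card S)"
    proof (rule even_card_if_fibres_even)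
      show "finite S"
        by (simp add: S_def N_def)
      show "(\<lambda>(i, a). \<pi> (i, j) a) ` S \<subseteq> {..<l}"
        using bij by (auto simp: S_def N_def check_neighbours_def dest: bij_betw_apply)
      fix b assume "b \<in> {..<l}"
      moreover have "{x \<in> S. (\<lambda>(i, a). \<pi> (i, j) a) x = b} =
          {(i, a). i < n \<and> a < l \<and> (i, j) \<in> E \<and> \<pi> (i, j) a = b \<and> y (i, a)}"
        by (auto simp: S_def N_def check_neighbours_def)
      ultimately show "even (card {x \<in> S. (\<lambda>(i, a). \<pi> (i, j) a) x = b})"
        using lift \<open>j < m\<close> by (simp add: lift_codeword_def)
    qed simp
    ultimately show ?thesis
      by (simp add: N_def)
  qed
  then show ?thesis
    by (simp add: even_check_sums_def p)
qed

theorem lemma5: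
  fixes n m :: nat and E :: "(nat \<times> nat) set" and p :: "nat \<Rightarrow> nat"
  assumes "tanner_graph n m E"
    and "lift_realizable_pseudocodeword n m E p"
  shows "\<exists>k (c :: nat \<Rightarrow> nat \<Rightarrow> nat) (r :: nat \<Rightarrow> nat).
           (\<forall>t<k. c t \<in> tanner_code n m E) \<and>
           (\<forall>i. p i = (\<Sum>t<k. c t i) + r i) \<and>
           (\<forall>i\<ge>n. r i = 0) \<and>
           (\<forall>cw \<in> tanner_code n m E. cw \<noteq> (\<lambda>_. 0) \<longrightarrow> \<not> supp cw \<subseteq> supp r) \<and>
           (r = (\<lambda>_. 0) \<or> (\<forall>i<n. r i = 0 \<or> even (r i)))"
proof -
  obtain k :: nat and c r where "\<forall>t<k. c t \<in> tanner_code n m E"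
      and "\<forall>i. p i = (\<Sum>t<k. c t i) + r i"
      and r: "even_check_sums n m E r"
      and no_cw: "\<forall>cw \<in> tanner_code n m E. cw \<noteq> (\<lambda>_. 0) \<longrightarrow> \<not> supp cw \<subseteq> supp r"
    using even_check_sums_peel_codewords[OF lift_realizable_even_check_sums[OF assms(2)]]
    by blast
  moreover have "\<forall>i\<ge>n. r i = 0"
    using r by (simp add: even_check_sums_def)
  moreover have "\<forall>i. even (r i)"
    using even_if_no_codeword_within_supp[OF r no_cw] by blast
  ultimately show ?thesis
    by blast
qed

end
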